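(* Let $(\mathbf d_n)$ be a family of degree sequences and $(k_n)$ positive integers with $k_n\le n$ and $k_n=o\big((n^2/m_2)^{2/3}\wedge(n^3/m_3)^{1/3}\big)$. Then, with $k=k_n$, \[g_n(k)=\exp\Big(-\frac{k^2\sigma^2}{2n}\Big)\Big(1+O\Big(\frac{k^{3/2}m_2}{n^2}+\frac{k^3m_3}{n^3}\Big)\Big).\]
   Context: A degree sequence is $\mathbf d_n=(d_1,\ldots,d_n)\in\mathbb N_0^n$ with $\sum_j d_j=n$ (dependence on $n$ suppressed); $m_j=\sum_i d_i^j$, $\sigma^2=m_2/n-1$, $x\wedge y=\min\{x,y\}$. $\langle n\rangle_k=n!/(n-k)!$ and $g_n(k)=\frac{k!}{\langle n\rangle_k}\sum_{1\le i_1<\cdots<i_k\le n}\prod_{j=1}^k d_{i_j}$. Asymptotics are as $n\to\infty$. *)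

theory Defs
  imports "HOL-Analysis.Analysis" "HOL-Library.Landau_Symbols"
begin

text \<open>A degree sequence of length n is d :: nat \<Rightarrow> nat on indices 1..n.\<close>

definition moment :: "nat \<Rightarrow> (nat \<Rightarrow> nat) \<Rightarrow> nat \<Rightarrow> real" where
  "moment j d n = (\<Sum>i=1..n. real (d i) ^ j)"

definition sigma2 :: "(nat \<Rightarrow> nat) \<Rightarrow> nat \<Rightarrow> real" where
  "sigma2 d n = moment 2 d n / real n - 1"

definition falling_fact :: "nat \<Rightarrow> nat \<Rightarrow> real" where
  "falling_fact n k = fact n / fact (n - k)"

definition gfun :: "(nat \<Rightarrow> nat) \<Rightarrow> nat \<Rightarrow> nat \<Rightarrow> real" where
  "gfun d n k = fact k / falling_fact n k *
     (\<Sum>S\<in>{S. S \<subseteq> {1..n} \<and> card S = k}. \<Prod>i\<in>S. real (d i))"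

end

theory Submission
  imports Defs
begin

text \<open>With \<open>x i = d i / n\<close>, a probability vector, \<open>g(k) = (n^k / \<langle>n\<rangle>_k) * k! e_k(x)\<close>, where
  \<open>e_k\<close> is the \<open>k\<close>-th elementary symmetric polynomial. Removing one coordinate at a time yields
  Newton-type inequalities between \<open>e_j\<close>, \<open>e_(j+1)\<close>, \<open>e_(j+2)\<close> and the power sums
  \<open>p_r = \<Sum>i. x i ^ r\<close>; they show that \<open>a_j = j! e_j\<close> satisfies
  \<open>a_(j+1) / a_j = 1 - j p_2 + O(j^2 p_2^2 + j^2 p_3)\<close> as long as \<open>k p_2\<close> is small.
  Summing logarithms, \<open>ln a_k = - p_2 k(k-1)/2 + O(k^3 p_2^2 + k^3 p_3)\<close>, and likewise
  \<open>ln (n^k / \<langle>n\<rangle>_k) = k(k-1)/(2n) + O(k^3/n^2)\<close>. Since \<open>p_2 = m_2/n^2 \<ge> 1/n\<close>, every error term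
  is \<open>O(k^(3/2) p_2 + k^3 p_3)\<close>, which is small under the hypothesis on \<open>k_n\<close>.\<close>

definition esym :: "('a \<Rightarrow> real) \<Rightarrow> 'a set \<Rightarrow> nat \<Rightarrow> real" where
  "esym x A j = (\<Sum>S\<in>{S. S \<subseteq> A \<and> card S = j}. \<Prod>i\<in>S. x i)"

lemma esym_0 [simp]:
  assumes "finite A"
  shows "esym x A 0 = 1"
proof -
  have "{S. S \<subseteq> A \<and> card S = 0} = {{}}"
    using assms by (auto simp: card_eq_0_iff dest: finite_subset)
  then show ?thesis by (simp add: esym_def)
qed

lemma esym_empty_Suc [simp]: "esym x {} (Suc j) = 0"
  by (simp add: esym_def)

lemma esym_insert_Suc:
  assumes "finite A" "a \<notin> A"
  shows "esym x (insert a A) (Suc j) = esym x A (Suc j) + x a * esym x A j"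
proof -
  let ?B = "{S. S \<subseteq> A \<and> card S = Suc j}"
  let ?C = "{S. S \<subseteq> A \<and> card S = j}"
  have finB: "finite ?B" and finC: "finite ?C"
    using assms by (auto intro: finite_subset[of _ "Pow A"])
  have split: "{S. S \<subseteq> insert a A \<and> card S = Suc j} = ?B \<union> insert a ` ?C"
  proof (intro set_eqI iffI)
    fix S assume S: "S \<in> {S. S \<subseteq> insert a A \<and> card S = Suc j}"
    show "S \<in> ?B \<union> insert a ` ?C"
    proof (cases "a \<in> S")
      case True
      then have "S - {a} \<in> ?C" "S = insert a (S - {a})"
        using S assms by (auto simp: card_Diff_singleton finite_subset)
      then show ?thesis by blast
    qed (use S in auto)
  qed (use assms in \<open>auto simp: card_insert_if finite_subset\<close>)
  have inj: "inj_on (insert a) ?C"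
    using assms by (intro inj_onI) (metis Diff_insert_absorb subsetD mem_Collect_eq)
  have "esym x (insert a A) (Suc j)
      = (\<Sum>S\<in>?B. \<Prod>i\<in>S. x i) + (\<Sum>S\<in>?C. \<Prod>i\<in>insert a S. x i)"
    unfolding esym_def split
    using finB finC assms by (subst sum.union_disjoint) (auto simp: sum.reindex[OF inj])
  also have "(\<Sum>S\<in>?C. \<Prod>i\<in>insert a S. x i) = x a * esym x A j"
    unfolding esym_def sum_distrib_left
  proof (intro sum.cong refl)
    fix S assume "S \<in> ?C"
    then have "finite S" "a \<notin> S" using assms by (auto intro: finite_subset)
    then show "(\<Prod>i\<in>insert a S. x i) = x a * (\<Prod>i\<in>S. x i)" by simp
  qed
  finally show ?thesis by (simp add: esym_def)
qed

lemma esym_1: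
  assumes "finite A"
  shows "esym x A 1 = (\<Sum>i\<in>A. x i)"
  using assms by (induction A rule: finite_induct) (simp_all add: esym_insert_Suc[of _ _ _ 0])

lemma esym_nonneg:
  assumes "\<And>i. i \<in> A \<Longrightarrow> 0 \<le> x i"
  shows "0 \<le> esym x A j"
  unfolding esym_def using assms by (auto intro!: sum_nonneg prod_nonneg)

lemma esym_Diff_singleton_Suc:
  assumes "finite A" "i \<in> A"
  shows "esym x A (Suc j) = esym x (A - {i}) (Suc j) + x i * esym x (A - {i}) j"
  using esym_insert_Suc[of "A - {i}" i x j] assms by (simp add: insert_absorb)

text \<open>Each \<open>(Suc j)\<close>-subset is counted once for each of its elements.\<close>

lemma esym_Suc_eq_sum_Diff_singleton:
  assumes "finite A"
  shows "real (Suc j) * esym x A (Suc j) = (\<Sum>i\<in>A. x i * esym x (A - {i}) j)"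
  using assms
proof (induction A arbitrary: j rule: finite_induct)
  case (insert a A)
  have Diff: "insert a A - {i} = insert a (A - {i})" if "i \<in> A" for i
    using insert.hyps that by auto
  have "(\<Sum>i\<in>insert a A. x i * esym x (insert a A - {i}) j)
      = x a * esym x A j + (\<Sum>i\<in>A. x i * esym x (insert a (A - {i})) j)"
    using insert.hyps by (simp add: Diff)
  also have "\<dots> = real (Suc j) * esym x (insert a A) (Suc j)"
  proof (cases j)
    case 0
    then show ?thesis
      using insert.hyps esym_1[of A x] by (simp add: esym_insert_Suc[of _ _ _ 0] One_nat_def)
  next
    case (Suc m)
    have "(\<Sum>i\<in>A. x i * esym x (insert a (A - {i})) j)
        = (\<Sum>i\<in>A. x i * esym x (A - {i}) (Suc m)) + x a * (\<Sum>i\<in>A. x i * esym x (A - {i}) m)"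
      using insert.hyps by (simp add: Suc esym_insert_Suc sum.distrib sum_distrib_left algebra_simps)
    also have "\<dots> = real (Suc j) * esym x A (Suc j) + x a * (real (Suc m) * esym x A (Suc m))"
      by (simp only: Suc insert.IH)
    finally have "(\<Sum>i\<in>A. x i * esym x (insert a (A - {i})) j)
        = real (Suc j) * esym x A (Suc j) + x a * (real j * esym x A j)"
      by (simp add: Suc)
    then show ?thesis
      using insert.hyps by (simp add: Suc esym_insert_Suc algebra_simps)
  qed
  finally show ?case by simp
qed simp

lemma esym_Diff_singleton_le:
  assumes "finite A" "\<And>i. i \<in> A \<Longrightarrow> 0 \<le> x i"
  shows "esym x (A - {i}) m \<le> esym x A m"
proof (cases "i \<in> A")
  case True
  show ?thesis
  proof (cases m)
    case (Suc j)
    have "0 \<le> x i * esym x (A - {i}) j"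
      using True assms(2) by (intro mult_nonneg_nonneg esym_nonneg) auto
    then show ?thesis
      using esym_Diff_singleton_Suc[OF assms(1) True, of x j] Suc by simp
  qed (use assms in simp)
qed simp

lemma esym_le_Diff_singleton_plus:
  assumes "finite A" "\<And>i. i \<in> A \<Longrightarrow> 0 \<le> x i" "i \<in> A"
  shows "esym x A m \<le> esym x (A - {i}) m + x i * esym x A (m - 1)"
proof (cases m)
  case 0
  have "0 \<le> x i * esym x A (m - 1)"
    using assms by (intro mult_nonneg_nonneg esym_nonneg) auto
  then show ?thesis using 0 assms(1) by simp
next
  case (Suc j)
  have "x i * esym x (A - {i}) j \<le> x i * esym x A j"
    using assms by (intro mult_left_mono esym_Diff_singleton_le) auto
  then show ?thesis
    using esym_Diff_singleton_Suc[OF assms(1,3), of x j] Suc by simp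
qed

lemma esym_Suc_le:
  assumes "finite A" "\<And>i. i \<in> A \<Longrightarrow> 0 \<le> x i"
  shows "real (Suc j) * esym x A (Suc j) \<le> (\<Sum>i\<in>A. x i) * esym x A j"
proof -
  have "real (Suc j) * esym x A (Suc j) = (\<Sum>i\<in>A. x i * esym x (A - {i}) j)"
    by (rule esym_Suc_eq_sum_Diff_singleton[OF assms(1)])
  also have "\<dots> \<le> (\<Sum>i\<in>A. x i * esym x A j)"
    using assms by (intro sum_mono mult_left_mono esym_Diff_singleton_le) auto
  finally show ?thesis by (simp add: sum_distrib_right)
qed

lemma esym_Suc_ge:
  assumes "finite A" "\<And>i. i \<in> A \<Longrightarrow> 0 \<le> x i"
  shows "(\<Sum>i\<in>A. x i) * esym x A j - (\<Sum>i\<in>A. x i ^ 2) * esym x A (j - 1)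
           \<le> real (Suc j) * esym x A (Suc j)"
proof -
  have "(\<Sum>i\<in>A. x i) * esym x A j - (\<Sum>i\<in>A. x i ^ 2) * esym x A (j - 1)
       = (\<Sum>i\<in>A. x i * (esym x A j - x i * esym x A (j - 1)))"
    by (simp add: sum_distrib_right sum_distrib_left sum_subtractf algebra_simps power2_eq_square)
  also have "\<dots> \<le> (\<Sum>i\<in>A. x i * esym x (A - {i}) j)"
    using esym_le_Diff_singleton_plus[OF assms] assms(2)
    by (intro sum_mono mult_left_mono) (auto simp: algebra_simps)
  also have "\<dots> = real (Suc j) * esym x A (Suc j)"
    by (rule esym_Suc_eq_sum_Diff_singleton[OF assms(1), symmetric])
  finally show ?thesis .
qed

lemma esym_Suc_Suc_le:
  assumes "finite A" "\<And>i. i \<in> A \<Longrightarrow> 0 \<le> x i"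
  shows "real (Suc (Suc m)) * esym x A (Suc (Suc m)) \<le>
     (\<Sum>i\<in>A. x i) * esym x A (Suc m) - (\<Sum>i\<in>A. x i ^ 2) * esym x A m
       + (\<Sum>i\<in>A. x i ^ 3) * esym x A (m - 1)"
proof -
  have "real (Suc (Suc m)) * esym x A (Suc (Suc m)) = (\<Sum>i\<in>A. x i * esym x (A - {i}) (Suc m))"
    by (rule esym_Suc_eq_sum_Diff_singleton[OF assms(1)])
  also have "\<dots> \<le> (\<Sum>i\<in>A. x i * (esym x A (Suc m) - x i * (esym x A m - x i * esym x A (m - 1))))"
  proof (intro sum_mono mult_left_mono assms(2))
    fix i assume i: "i \<in> A"
    have "x i * (esym x A m - x i * esym x A (m - 1)) \<le> x i * esym x (A - {i}) m"
      using esym_le_Diff_singleton_plus[OF assms i] assms(2)[OF i]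
      by (intro mult_left_mono) (auto simp: algebra_simps)
    then show "esym x (A - {i}) (Suc m) \<le> esym x A (Suc m) - x i * (esym x A m - x i * esym x A (m - 1))"
      using esym_Diff_singleton_Suc[OF assms(1) i, of x m] by simp
  qed
  also have "\<dots> = (\<Sum>i\<in>A. x i) * esym x A (Suc m) - (\<Sum>i\<in>A. x i ^ 2) * esym x A m
       + (\<Sum>i\<in>A. x i ^ 3) * esym x A (m - 1)"
    by (simp add: sum_distrib_right sum_distrib_left sum_subtractf sum.distrib algebra_simps
        power2_eq_square power3_eq_cube)
  finally show ?thesis .
qed

lemma sum_lessThan_of_nat: "(\<Sum>j<k. real j) = real k * (real k - 1) / 2"
  by (induction k) (simp_all add: field_simps)

lemma sum_lessThan_power2_le: "(\<Sum>j<k. real j ^ 2) \<le> real k ^ 3"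
proof -
  have "(\<Sum>j<k. real j ^ 2) \<le> real (card {..<k}) * real k ^ 2"
    by (intro sum_bounded_above power_mono) auto
  then show ?thesis by (simp add: power2_eq_square power3_eq_cube)
qed

lemma falling_fact_eq_prod: "k \<le> n \<Longrightarrow> falling_fact n k = (\<Prod>i<k. real (n - i))"
proof (induction k)
  case (Suc k)
  have "fact (n - k) = real (n - k) * fact (n - Suc k)"
    using Suc.prems by (simp add: fact_reduce Suc_diff_Suc)
  then have "falling_fact n (Suc k) = falling_fact n k * real (n - k)"
    using Suc.prems by (simp add: falling_fact_def)
  then show ?case using Suc by simp
qed (simp add: falling_fact_def)

lemma ln_pow_div_falling_fact_bounds:
  assumes "0 < n" "2 * k \<le> n"
  shows "real k * (real k - 1) / (2 * real n) \<le> ln (real n ^ k / falling_fact n k)"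
    and "ln (real n ^ k / falling_fact n k)
           \<le> real k * (real k - 1) / (2 * real n) + 2 * real k ^ 3 / real n ^ 2"
proof -
  define t where "t i = real i / real n" for i
  have t: "0 \<le> t i" "t i \<le> 1/2" if "i < k" for i
    using assms that by (auto simp: t_def field_simps)
  have "(\<Prod>i<k. inverse (1 - t i)) = (\<Prod>i<k. real n / real (n - i))"
    using assms by (intro prod.cong) (auto simp: t_def field_simps of_nat_diff)
  also have "\<dots> = real n ^ k / falling_fact n k"
    using assms by (simp add: prod_dividef falling_fact_eq_prod)
  finally have "ln (real n ^ k / falling_fact n k) = ln (\<Prod>i<k. inverse (1 - t i))"
    by simp
  also have "\<dots> = (\<Sum>i<k. ln (inverse (1 - t i)))"
    by (rule ln_prod) (use t in force)+
  finally have ln_eq: "ln (real n ^ k / falling_fact n k) = (\<Sum>i<k. - ln (1 - t i))"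
    by (simp add: ln_inverse)
  have "(\<Sum>i<k. t i) = real k * (real k - 1) / (2 * real n)"
    by (simp add: t_def sum_divide_distrib[symmetric] sum_lessThan_of_nat)
  moreover have "(\<Sum>i<k. t i) \<le> (\<Sum>i<k. - ln (1 - t i))"
  proof (intro sum_mono)
    fix i assume "i \<in> {..<k}"
    then show "t i \<le> - ln (1 - t i)"
      using t[of i] ln_le_minus_one[of "1 - t i"] by simp
  qed
  ultimately show "real k * (real k - 1) / (2 * real n) \<le> ln (real n ^ k / falling_fact n k)"
    by (simp add: ln_eq)
  have "(\<Sum>i<k. - ln (1 - t i)) \<le> (\<Sum>i<k. t i + 2 * t i ^ 2)"
    using t ln_one_minus_pos_lower_bound by (intro sum_mono) fastforce
  also have "\<dots> = real k * (real k - 1) / (2 * real n) + 2 * (\<Sum>i<k. real i ^ 2) / real n ^ 2"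
    by (simp add: t_def sum.distrib sum_distrib_left sum_divide_distrib[symmetric]
        sum_lessThan_of_nat power_divide)
  also have "\<dots> \<le> real k * (real k - 1) / (2 * real n) + 2 * real k ^ 3 / real n ^ 2"
    using sum_lessThan_power2_le[of k] by (simp add: divide_right_mono)
  finally show "ln (real n ^ k / falling_fact n k)
           \<le> real k * (real k - 1) / (2 * real n) + 2 * real k ^ 3 / real n ^ 2"
    by (simp add: ln_eq)
qed

lemma gfun_eq_mult_esym:
  assumes "0 < n"
  shows "gfun d n k
    = real n ^ k / falling_fact n k * (fact k * esym (\<lambda>i. real (d i) / real n) {1..n} k)"
proof -
  have "(\<Prod>i\<in>S. real (d i)) = real n ^ k * (\<Prod>i\<in>S. real (d i) / real n)"
    if "card S = k" for S :: "nat set"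
    using assms that by (simp add: prod_dividef)
  then have "esym (\<lambda>i. real (d i)) {1..n} k = real n ^ k * esym (\<lambda>i. real (d i) / real n) {1..n} k"
    unfolding esym_def sum_distrib_left by (intro sum.cong) auto
  then show ?thesis
    by (simp add: gfun_def esym_def[symmetric])
qed

lemma abs_exp_minus_one_le:
  fixes t :: real
  assumes "\<bar>t\<bar> \<le> 1/2"
  shows "\<bar>exp t - 1\<bar> \<le> 2 * \<bar>t\<bar>"
proof (cases "0 \<le> t")
  case True
  then show ?thesis using assms real_exp_bound_lemma[of t] by simp
next
  case False
  then show ?thesis using exp_ge_add_one_self[of t] by (simp; linarith)
qed

lemma abs_minus_exp_le_of_abs_ln_minus_le:
  fixes g t c :: real
  assumes "0 < g" "\<bar>ln g - t\<bar> \<le> c" "c \<le> 1/2"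
  shows "\<bar>g - exp t\<bar> \<le> 2 * c * exp t"
proof -
  have "g - exp t = exp t * (exp (ln g - t) - 1)"
    using assms(1) by (simp add: exp_diff algebra_simps)
  then have "\<bar>g - exp t\<bar> = exp t * \<bar>exp (ln g - t) - 1\<bar>"
    by (simp add: abs_mult)
  also have "\<dots> \<le> exp t * (2 * c)"
    using abs_exp_minus_one_le[of "ln g - t"] assms(2,3) by (intro mult_left_mono) auto
  finally show ?thesis by (simp add: mult_ac)
qed

lemma powr_three_halves_power2:
  fixes x :: real
  assumes "0 \<le> x"
  shows "(x powr (3/2)) ^ 2 = x ^ 3"
proof (cases "x = 0")
  case False
  then have "(x powr (3/2)) ^ 2 = x powr (real 2 * (3/2))"
    by (intro powr_power) auto
  also have "\<dots> = x ^ 3"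
    using assms by (simp add: powr_numeral)
  finally show ?thesis .
qed simp

locale prob_vector =
  fixes A :: "'a set" and x :: "'a \<Rightarrow> real"
  assumes finite: "finite A"
    and nonneg: "\<And>i. i \<in> A \<Longrightarrow> 0 \<le> x i"
    and sum_eq_1: "(\<Sum>i\<in>A. x i) = 1"
begin

definition p2 :: real where "p2 = (\<Sum>i\<in>A. x i ^ 2)"

definition p3 :: real where "p3 = (\<Sum>i\<in>A. x i ^ 3)"

definition scaled_esym :: "nat \<Rightarrow> real" where
  "scaled_esym j = fact j * esym x A j"

lemma p2_nonneg: "0 \<le> p2"
  unfolding p2_def by (intro sum_nonneg) simp

lemma p3_nonneg: "0 \<le> p3"
  unfolding p3_def using nonneg by (intro sum_nonneg) simp

lemma card_mult_p2_ge_1: "1 \<le> real (card A) * p2"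
  using sum_squared_le_sum_of_squares[of x A] by (simp add: sum_eq_1 p2_def mult.commute)

lemma scaled_esym_0 [simp]: "scaled_esym 0 = 1"
  by (simp add: scaled_esym_def finite)

lemma scaled_esym_1 [simp]: "scaled_esym 1 = 1"
  using esym_1[OF finite, of x] by (simp add: scaled_esym_def sum_eq_1)

lemma scaled_esym_nonneg: "0 \<le> scaled_esym j"
  unfolding scaled_esym_def using nonneg by (simp add: esym_nonneg)

lemma scaled_esym_Suc: "scaled_esym (Suc j) = fact j * (real (Suc j) * esym x A (Suc j))"
  by (simp add: scaled_esym_def algebra_simps)

lemma scaled_esym_Suc_le: "scaled_esym (Suc j) \<le> scaled_esym j"
  using esym_Suc_le[of A x j, OF finite nonneg]
  by (simp add: scaled_esym_Suc scaled_esym_def sum_eq_1 mult_left_mono)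

lemma scaled_esym_Suc_ge: "scaled_esym j - real j * p2 * scaled_esym (j - 1) \<le> scaled_esym (Suc j)"
proof (cases j)
  case (Suc i)
  have "fact j * (esym x A j - p2 * esym x A (j - 1)) \<le> scaled_esym (Suc j)"
    using esym_Suc_ge[of A x j, OF finite nonneg]
    by (simp add: scaled_esym_Suc sum_eq_1 p2_def mult_left_mono)
  moreover have "fact j = real j * fact (j - 1)"
    using Suc by (simp add: fact_reduce)
  ultimately show ?thesis by (simp add: scaled_esym_def algebra_simps)
qed (simp flip: One_nat_def)

text \<open>For \<open>m = 0\<close> (where \<open>m - 1 = 0\<close>) the last term must be \<open>p3\<close>, hence the coefficient
  \<open>(m + 1)\<^sup>2\<close> rather than \<open>(m + 1) m\<close>.\<close>

lemma scaled_esym_Suc_Suc_le: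
  "scaled_esym (Suc (Suc m)) \<le> scaled_esym (Suc m) - real (Suc m) * p2 * scaled_esym m
      + real (Suc m) ^ 2 * p3 * scaled_esym (m - 1)"
proof -
  have "scaled_esym (Suc (Suc m)) \<le> scaled_esym (Suc m) - real (Suc m) * p2 * scaled_esym m
      + p3 * (fact (Suc m) * esym x A (m - 1))"
    using mult_left_mono[OF esym_Suc_Suc_le[of A x m, OF finite nonneg], of "fact (Suc m)"]
    by (simp add: scaled_esym_Suc[of "Suc m"] scaled_esym_def sum_eq_1 p2_def p3_def algebra_simps)
  moreover have "fact (Suc m) \<le> real (Suc m) ^ 2 * fact (m - 1)"
  proof (cases m)
    case (Suc i)
    then show ?thesis by (simp add: power2_eq_square mult_right_mono)
  qed simp
  then have "fact (Suc m) * esym x A (m - 1) \<le> real (Suc m) ^ 2 * scaled_esym (m - 1)"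
    using esym_nonneg[of A x "m - 1"] nonneg
    unfolding scaled_esym_def mult.assoc[symmetric] by (intro mult_right_mono) auto
  then have "p3 * (fact (Suc m) * esym x A (m - 1)) \<le> real (Suc m) ^ 2 * p3 * scaled_esym (m - 1)"
    using mult_left_mono[OF _ p3_nonneg] by (metis mult.assoc mult.commute)
  ultimately show ?thesis by linarith
qed

context
  fixes k :: nat
  assumes small: "8 * real k * p2 \<le> 1"
begin

lemma mult_p2_le: "j \<le> k \<Longrightarrow> real j * p2 \<le> 1/8"
  using small mult_right_mono[of "real j" "real k" p2] p2_nonneg by simp

lemma scaled_esym_ratio_ge:
  assumes "j < k"
  shows "0 < scaled_esym (Suc j) \<and>
    (1 - real j * p2 - 4 * (real j * p2) ^ 2) * scaled_esym j \<le> scaled_esym (Suc j)"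
  using assms
proof (induction j)
  case 0
  show ?case by (simp flip: One_nat_def)
next
  case (Suc j)
  define u where "u = real j * p2"
  define u' where "u' = real (Suc j) * p2"
  have u: "0 \<le> u" "u \<le> u'" "u' \<le> 1/8"
    using Suc.prems mult_p2_le[of "Suc j"] p2_nonneg by (auto simp: u_def u'_def mult_right_mono)
  have IH: "0 < scaled_esym (Suc j)" "(1 - u - 4 * u ^ 2) * scaled_esym j \<le> scaled_esym (Suc j)"
    using Suc by (auto simp: u_def)
  have "u ^ 2 \<le> u / 8" "u ^ 3 \<le> u / 64"
    using u mult_left_mono[of u "1/8" u] mult_left_mono[of "u^2" "1/64" u]
    by (auto simp: power2_eq_square power3_eq_cube)
  moreover have "(1 + 4 * u) * (1 - u - 4 * u ^ 2) = 1 + 3 * u - 8 * u ^ 2 - 16 * u ^ 3"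
    by (simp add: algebra_simps power2_eq_square power3_eq_cube)
  ultimately have expand: "1 \<le> (1 + 4 * u) * (1 - u - 4 * u ^ 2)"
    using u by linarith
  \<comment> \<open>inverting the induction hypothesis bounds \<open>a_j\<close> by \<open>a_(j+1)\<close>, as the lower Newton
    inequality at \<open>j + 1\<close> requires\<close>
  have "scaled_esym j \<le> (1 + 4 * u) * ((1 - u - 4 * u ^ 2) * scaled_esym j)"
    using mult_right_mono[OF expand scaled_esym_nonneg] by (simp add: mult.assoc)
  also have "\<dots> \<le> (1 + 4 * u) * scaled_esym (Suc j)"
    using IH(2) u by (intro mult_left_mono) auto
  also have "\<dots> \<le> (1 + 4 * u') * scaled_esym (Suc j)"
    using IH(1) u by (intro mult_right_mono) auto
  finally have "u' * scaled_esym j \<le> u' * ((1 + 4 * u') * scaled_esym (Suc j))"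
    using u by (intro mult_left_mono) auto
  moreover have "scaled_esym (Suc j) - u' * scaled_esym j \<le> scaled_esym (Suc (Suc j))"
    using scaled_esym_Suc_ge[of "Suc j"] by (simp add: u'_def)
  ultimately have "(1 - u' - 4 * u' ^ 2) * scaled_esym (Suc j) \<le> scaled_esym (Suc (Suc j))"
    by (simp add: algebra_simps power2_eq_square)
  moreover have "0 < (1 - u' - 4 * u' ^ 2) * scaled_esym (Suc j)"
    using u IH(1) mult_left_mono[of u' "1/8" u'] by (simp add: power2_eq_square)
  ultimately show ?case by (simp add: u'_def)
qed

lemma scaled_esym_pos: "j \<le> k \<Longrightarrow> 0 < scaled_esym j"
  using scaled_esym_ratio_ge[of "j - 1"] by (cases j) auto

lemma scaled_esym_le_double_Suc:
  assumes "j < k"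
  shows "scaled_esym j \<le> 2 * scaled_esym (Suc j)"
proof -
  define u where "u = real j * p2"
  have "0 \<le> u" "u \<le> 1/8"
    using assms mult_p2_le[of j] p2_nonneg by (auto simp: u_def)
  then have "1/2 \<le> 1 - u - 4 * u ^ 2"
    using mult_left_mono[of u "1/8" u] by (simp add: power2_eq_square)
  then have "scaled_esym j \<le> 2 * ((1 - u - 4 * u ^ 2) * scaled_esym j)"
    using mult_right_mono[OF _ scaled_esym_nonneg, of 1 "2 * (1 - u - 4 * u ^ 2)" j]
    by (simp add: algebra_simps)
  then show ?thesis
    using scaled_esym_ratio_ge[OF assms] by (simp add: u_def)
qed

lemma scaled_esym_ratio_le:
  assumes "j < k"
  shows "scaled_esym (Suc j) \<le> (1 - real j * p2 + 4 * real j ^ 2 * p3) * scaled_esym j"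
proof (cases j)
  case 0
  then show ?thesis by (simp flip: One_nat_def)
next
  case (Suc m)
  have "scaled_esym (m - 1) \<le> 2 * scaled_esym m"
    using assms Suc scaled_esym_le_double_Suc[of "m - 1"] by (cases m) auto
  then have four: "scaled_esym (m - 1) \<le> 4 * scaled_esym (Suc m)"
    using assms Suc scaled_esym_le_double_Suc[of m] by simp
  have "real (Suc m) * p2 * scaled_esym (Suc m) \<le> real (Suc m) * p2 * scaled_esym m"
    using scaled_esym_Suc_le p2_nonneg by (intro mult_left_mono) auto
  moreover have "real (Suc m) ^ 2 * p3 * scaled_esym (m - 1)
      \<le> real (Suc m) ^ 2 * p3 * (4 * scaled_esym (Suc m))"
    using four p3_nonneg by (intro mult_left_mono) auto
  ultimately show ?thesis
    using scaled_esym_Suc_Suc_le[of m] Suc by (simp add: algebra_simps)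
qed

lemma ln_scaled_esym_Suc_diff_bounds:
  assumes "j < k"
  shows "- real j * p2 - 12 * (real j * p2) ^ 2 \<le> ln (scaled_esym (Suc j)) - ln (scaled_esym j)"
    and "ln (scaled_esym (Suc j)) - ln (scaled_esym j) \<le> - real j * p2 + 4 * real j ^ 2 * p3"
proof -
  define u where "u = real j * p2"
  define y where "y = u + 4 * u ^ 2"
  define r where "r = scaled_esym (Suc j) / scaled_esym j"
  have pos: "0 < scaled_esym j" "0 < scaled_esym (Suc j)"
    using assms by (auto intro: scaled_esym_pos)
  then have diff: "ln (scaled_esym (Suc j)) - ln (scaled_esym j) = ln r"
    by (simp add: r_def ln_div)
  have u: "0 \<le> u" "u \<le> 1/8"
    using assms mult_p2_le[of j] p2_nonneg by (auto simp: u_def)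
  then have "u ^ 2 \<le> u / 8"
    using mult_left_mono[of u "1/8" u] by (simp add: power2_eq_square)
  then have y: "0 \<le> y" "y \<le> 2 * u" "y \<le> 1/2"
    using u by (auto simp: y_def)
  have "y ^ 2 \<le> (2 * u) ^ 2"
    using y by (intro power_mono) auto
  have "1 - y \<le> r"
    using scaled_esym_ratio_ge[OF assms] pos by (simp add: r_def y_def u_def field_simps)
  then have "ln (1 - y) \<le> ln r"
    using y by (subst ln_le_cancel_iff) auto
  then have "- y - 2 * y ^ 2 \<le> ln r"
    using ln_one_minus_pos_lower_bound[OF y(1,3)] by simp
  with \<open>y ^ 2 \<le> (2 * u) ^ 2\<close>
  show "- real j * p2 - 12 * (real j * p2) ^ 2 \<le> ln (scaled_esym (Suc j)) - ln (scaled_esym j)"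
    by (simp add: diff y_def u_def power_mult_distrib)
  have "r \<le> 1 - real j * p2 + 4 * real j ^ 2 * p3"
    using scaled_esym_ratio_le[OF assms] pos by (simp add: r_def divide_le_eq)
  then show "ln (scaled_esym (Suc j)) - ln (scaled_esym j) \<le> - real j * p2 + 4 * real j ^ 2 * p3"
    using ln_le_minus_one[of r] pos by (simp add: diff r_def)
qed

lemma ln_scaled_esym_bounds:
  shows "- p2 * real k * (real k - 1) / 2 - 12 * p2 ^ 2 * real k ^ 3 \<le> ln (scaled_esym k)"
    and "ln (scaled_esym k) \<le> - p2 * real k * (real k - 1) / 2 + 4 * p3 * real k ^ 3"
proof -
  have telescope: "ln (scaled_esym k) = (\<Sum>j<k. ln (scaled_esym (Suc j)) - ln (scaled_esym j))"
    using sum_lessThan_telescope[of "\<lambda>j. ln (scaled_esym j)" k] by simp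
  have "- p2 * real k * (real k - 1) / 2 - 12 * p2 ^ 2 * real k ^ 3
      \<le> - p2 * (\<Sum>j<k. real j) - 12 * p2 ^ 2 * (\<Sum>j<k. real j ^ 2)"
    using mult_left_mono[OF sum_lessThan_power2_le[of k], of "p2 ^ 2"]
    by (simp add: sum_lessThan_of_nat)
  also have "\<dots> = (\<Sum>j<k. - real j * p2 - 12 * (real j * p2) ^ 2)"
    by (simp add: sum_subtractf sum_distrib_left power_mult_distrib algebra_simps)
  also have "\<dots> \<le> ln (scaled_esym k)"
    unfolding telescope by (intro sum_mono ln_scaled_esym_Suc_diff_bounds(1)) simp
  finally show "- p2 * real k * (real k - 1) / 2 - 12 * p2 ^ 2 * real k ^ 3 \<le> ln (scaled_esym k)" .
  have "ln (scaled_esym k) \<le> (\<Sum>j<k. - real j * p2 + 4 * real j ^ 2 * p3)"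
    unfolding telescope by (intro sum_mono ln_scaled_esym_Suc_diff_bounds(2)) simp
  also have "\<dots> = - p2 * (\<Sum>j<k. real j) + 4 * p3 * (\<Sum>j<k. real j ^ 2)"
    by (simp add: sum_subtractf sum_distrib_left sum_negf algebra_simps)
  also have "\<dots> \<le> - p2 * real k * (real k - 1) / 2 + 4 * p3 * real k ^ 3"
    using mult_left_mono[OF sum_lessThan_power2_le[of k], of "4 * p3"] p3_nonneg
    by (simp add: sum_lessThan_of_nat)
  finally show "ln (scaled_esym k) \<le> - p2 * real k * (real k - 1) / 2 + 4 * p3 * real k ^ 3" .
qed

end

lemma two_mult_le_card:
  assumes "real k * p2 \<le> 1/2"
  shows "2 * k \<le> card A"
proof -
  have "real k * 1 \<le> real k * (real (card A) * p2)"
    using card_mult_p2_ge_1 by (intro mult_left_mono) auto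
  also have "\<dots> = real (card A) * (real k * p2)"
    by (simp add: mult_ac)
  also have "\<dots> \<le> real (card A) * (1/2)"
    using assms by (intro mult_left_mono) auto
  finally show ?thesis by simp
qed

text \<open>\<open>ln g(k)\<close> splits into \<open>ln (n^k / \<langle>n\<rangle>_k)\<close>, \<open>ln (k! e_k)\<close> and the remainder
  \<open>(k p_2 - k/n) / 2\<close>, which is nonnegative because \<open>p_2 \<ge> 1/n\<close> (Cauchy-Schwarz).\<close>

lemma abs_ln_falling_ratio_mult_scaled_esym_le:
  fixes n k :: nat
  defines "u \<equiv> real k powr (3/2) * p2" and "v \<equiv> real k ^ 3 * p3"
  assumes "card A = n" "1 \<le> k" and u_small: "u \<le> 1/100" and v_small: "v \<le> 1/100"
  shows "0 < real n ^ k / falling_fact n k * scaled_esym k"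
    and "\<bar>ln (real n ^ k / falling_fact n k * scaled_esym k)
           - - (real k ^ 2 * (real n * p2 - 1)) / (2 * real n)\<bar> \<le> 13 * (u + v)"
proof -
  have n_p2: "1 \<le> real n * p2"
    using card_mult_p2_ge_1 \<open>card A = n\<close> by simp
  then have "0 < n"
    by (cases n) auto
  have "real k * p2 \<le> real k powr (3/2) * p2"
    using powr_mono[of 1 "3/2" "real k"] \<open>1 \<le> k\<close> p2_nonneg by (simp add: mult_right_mono)
  then have k_p2_le: "real k * p2 \<le> u"
    by (simp add: u_def)
  have u_sq: "u ^ 2 = p2 ^ 2 * real k ^ 3"
    by (simp add: u_def power_mult_distrib powr_three_halves_power2)
  have small: "8 * real k * p2 \<le> 1"
    using k_p2_le u_small by simp
  have "2 * k \<le> n"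
    using two_mult_le_card[of k] k_p2_le u_small \<open>card A = n\<close> by simp
  note F_bounds = ln_pow_div_falling_fact_bounds[OF \<open>0 < n\<close> this]
  note a_bounds = ln_scaled_esym_bounds[OF small]
  have F_pos: "0 < real n ^ k / falling_fact n k"
    using \<open>2 * k \<le> n\<close> \<open>0 < n\<close> by (simp add: falling_fact_def)
  show "0 < real n ^ k / falling_fact n k * scaled_esym k"
    using F_pos scaled_esym_pos[OF small order_refl] by (rule mult_pos_pos)
  define LF where "LF = ln (real n ^ k / falling_fact n k) - real k * (real k - 1) / (2 * real n)"
  define La where "La = ln (scaled_esym k) + p2 * real k * (real k - 1) / 2"
  define W where "W = real k * p2 - real k / real n"
  have "ln (real n ^ k / falling_fact n k * scaled_esym k)
      - - (real k ^ 2 * (real n * p2 - 1)) / (2 * real n) = LF + La + W / 2"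
    unfolding ln_mult_pos[OF F_pos scaled_esym_pos[OF small order_refl]] LF_def La_def W_def
    using \<open>0 < n\<close> by (simp add: field_simps power2_eq_square)
  moreover have "2 * real k ^ 3 / real n ^ 2 \<le> 2 * u ^ 2"
  proof -
    have "real k ^ 3 * 1 \<le> real k ^ 3 * (real n * p2) ^ 2"
      using n_p2 by (intro mult_left_mono) auto
    then show ?thesis
      using \<open>0 < n\<close> by (simp add: u_sq field_simps power_mult_distrib)
  qed
  then have "0 \<le> LF" "LF \<le> 2 * u ^ 2"
    using F_bounds by (simp_all add: LF_def)
  moreover have "- 12 * u ^ 2 \<le> La" "La \<le> 4 * v"
    using a_bounds by (simp_all add: La_def u_sq v_def mult_ac)
  moreover have "0 \<le> W"
    using mult_left_mono[OF n_p2, of "real k"] \<open>0 < n\<close> by (simp add: W_def field_simps)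
  moreover have "W \<le> u"
  proof -
    have "0 \<le> real k / real n" by simp
    with k_p2_le show ?thesis unfolding W_def by linarith
  qed
  moreover have "u ^ 2 \<le> u / 100"
    using u_small p2_nonneg mult_left_mono[of u "1/100" u]
    by (simp add: u_def power2_eq_square)
  moreover have "0 \<le> v"
    using p3_nonneg by (simp add: v_def)
  ultimately show "\<bar>ln (real n ^ k / falling_fact n k * scaled_esym k)
           - - (real k ^ 2 * (real n * p2 - 1)) / (2 * real n)\<bar> \<le> 13 * (u + v)"
    by (simp add: abs_le_iff)
qed

end

lemma abs_ln_gfun_le:
  fixes d :: "nat \<Rightarrow> nat" and n k :: nat
  defines "u \<equiv> real k powr (3/2) * moment 2 d n / real n ^ 2"
    and "v \<equiv> real k ^ 3 * moment 3 d n / real n ^ 3"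
  assumes deg: "(\<Sum>i=1..n. d i) = n" and "0 < n" "1 \<le> k"
    and u_small: "u \<le> 1/100" and v_small: "v \<le> 1/100"
  shows "0 < gfun d n k"
    and "\<bar>ln (gfun d n k) - - (real k ^ 2 * sigma2 d n) / (2 * real n)\<bar> \<le> 13 * (u + v)"
proof -
  define A where "A = {1..n}"
  define x where "x = (\<lambda>i. real (d i) / real n)"
  interpret prob_vector A x
  proof
    show "(\<Sum>i\<in>A. x i) = 1"
      using deg \<open>0 < n\<close> by (simp add: A_def x_def sum_divide_distrib[symmetric] flip: of_nat_sum)
  qed (simp_all add: A_def x_def)
  have p2_eq: "p2 = moment 2 d n / real n ^ 2" and p3_eq: "p3 = moment 3 d n / real n ^ 3"
    unfolding p2_def p3_def by (simp_all add: A_def moment_def x_def power_divide sum_divide_distrib)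
  have "gfun d n k = real n ^ k / falling_fact n k * scaled_esym k"
    unfolding scaled_esym_def unfolding A_def x_def by (rule gfun_eq_mult_esym[OF \<open>0 < n\<close>])
  moreover have "sigma2 d n = real n * p2 - 1"
    using \<open>0 < n\<close> by (simp add: sigma2_def p2_eq power2_eq_square)
  moreover have "u = real k powr (3/2) * p2" "v = real k ^ 3 * p3"
    by (simp_all add: u_def v_def p2_eq p3_eq)
  moreover have "card A = n"
    by (simp add: A_def)
  ultimately show "0 < gfun d n k"
    and "\<bar>ln (gfun d n k) - - (real k ^ 2 * sigma2 d n) / (2 * real n)\<bar> \<le> 13 * (u + v)"
    using abs_ln_falling_ratio_mult_scaled_esym_le[of n k] \<open>1 \<le> k\<close> u_small v_small by simp_all
qed

lemma of_nat_le_moment: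
  assumes "(\<Sum>i=1..n. d i) = n" "1 \<le> r"
  shows "real n \<le> moment r d n"
proof -
  have "real (d i) \<le> real (d i) ^ r" for i
    using assms(2) by (cases "d i") (auto intro: order_trans[OF _ power_increasing[of 1 r]])
  then have "(\<Sum>i=1..n. real (d i)) \<le> moment r d n"
    unfolding moment_def by (intro sum_mono)
  then show ?thesis
    using assms(1) by (simp flip: of_nat_sum)
qed

lemma powr_le_mult_of_le_mult_powr:
  fixes t c B p :: real
  assumes "1 \<le> p" "0 \<le> c" "c \<le> 1" "0 \<le> B" "0 \<le> t" "t \<le> c * B powr (1/p)"
  shows "t powr p \<le> c * B"
proof -
  have "t powr p \<le> (c * B powr (1/p)) powr p"
    using assms by (intro powr_mono2) auto
  also have "\<dots> = c powr p * B"
    using assms by (simp add: powr_mult powr_powr)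
  also have "\<dots> \<le> c * B"
    using powr_mono'[of 1 p c] assms by (intro mult_right_mono) auto
  finally show ?thesis .
qed

lemma moment_terms_le_of_le_min_powr:
  fixes d :: "nat \<Rightarrow> nat" and n k :: nat and c :: real
  assumes deg: "(\<Sum>i=1..n. d i) = n" and "0 < n" "0 \<le> c" "c \<le> 1"
    and k_le: "real k \<le> c * min ((real n ^ 2 / moment 2 d n) powr (2/3))
                                 ((real n ^ 3 / moment 3 d n) powr (1/3))"
  shows "real k powr (3/2) * moment 2 d n / real n ^ 2 \<le> c"
    and "real k ^ 3 * moment 3 d n / real n ^ 3 \<le> c"
proof -
  have m2: "0 < moment 2 d n" and m3: "0 < moment 3 d n"
    using of_nat_le_moment[OF deg, of 2] of_nat_le_moment[OF deg, of 3] \<open>0 < n\<close> by simp_all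
  have "real k \<le> c * (real n ^ 2 / moment 2 d n) powr (2/3)"
    using order_trans[OF k_le mult_left_mono[OF min.cobounded1 \<open>0 \<le> c\<close>]] .
  then have "real k \<le> c * (real n ^ 2 / moment 2 d n) powr (1 / (3/2))"
    by simp
  then have "real k powr (3/2) \<le> c * (real n ^ 2 / moment 2 d n)"
    using assms m2 by (intro powr_le_mult_of_le_mult_powr) auto
  then show "real k powr (3/2) * moment 2 d n / real n ^ 2 \<le> c"
    using m2 \<open>0 < n\<close> by (simp add: field_simps)
  have "real k \<le> c * (real n ^ 3 / moment 3 d n) powr (1 / 3)"
    using order_trans[OF k_le mult_left_mono[OF min.cobounded2 \<open>0 \<le> c\<close>]] .
  then have "real k powr 3 \<le> c * (real n ^ 3 / moment 3 d n)"
    using assms m3 by (intro powr_le_mult_of_le_mult_powr) auto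
  then show "real k ^ 3 * moment 3 d n / real n ^ 3 \<le> c"
    using m3 \<open>0 < n\<close> by (simp add: field_simps)
qed

lemma abs_gfun_minus_exp_le:
  fixes d :: "nat \<Rightarrow> nat" and n k :: nat
  assumes deg: "(\<Sum>i=1..n. d i) = n" and "0 < n" "1 \<le> k"
    and k_le: "real k \<le> 1/100 * min ((real n ^ 2 / moment 2 d n) powr (2/3))
                                     ((real n ^ 3 / moment 3 d n) powr (1/3))"
  shows "\<bar>gfun d n k - exp (- (real k ^ 2 * sigma2 d n) / (2 * real n))\<bar>
    \<le> 26 * \<bar>exp (- (real k ^ 2 * sigma2 d n) / (2 * real n)) *
              (real k powr (3/2) * moment 2 d n / real n ^ 2 + real k ^ 3 * moment 3 d n / real n ^ 3)\<bar>"
proof -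
  note terms_small = moment_terms_le_of_le_min_powr[OF deg \<open>0 < n\<close> _ _ k_le]
  have "\<bar>gfun d n k - exp (- (real k ^ 2 * sigma2 d n) / (2 * real n))\<bar>
    \<le> 2 * (13 * (real k powr (3/2) * moment 2 d n / real n ^ 2 + real k ^ 3 * moment 3 d n / real n ^ 3))
        * exp (- (real k ^ 2 * sigma2 d n) / (2 * real n))" (is "_ \<le> 2 * (13 * ?S) * ?E")
    using terms_small abs_ln_gfun_le[OF deg \<open>0 < n\<close> \<open>1 \<le> k\<close>]
    by (intro abs_minus_exp_le_of_abs_ln_minus_le) auto
  moreover have "2 * (13 * ?S) * ?E = 26 * (?E * ?S)"
    by simp
  ultimately show ?thesis
    using abs_ge_self[of "?E * ?S"] by linarith
qed

theorem lemma3p7: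
  fixes d :: "nat \<Rightarrow> nat \<Rightarrow> nat" and k :: "nat \<Rightarrow> nat"
  assumes degseq: "\<And>n. (\<Sum>i=1..n. d n i) = n"
    and kpos: "\<And>n. n \<ge> 1 \<Longrightarrow> 0 < k n \<and> k n \<le> n"
    and ksmall: "(\<lambda>n. real (k n)) \<in>
        o(\<lambda>n. min ((real n ^ 2 / moment 2 (d n) n) powr (2/3))
                   ((real n ^ 3 / moment 3 (d n) n) powr (1/3)))"
  shows "(\<lambda>n. gfun (d n) n (k n) - exp (- (real (k n) ^ 2 * sigma2 (d n) n) / (2 * real n)))
         \<in> O(\<lambda>n. exp (- (real (k n) ^ 2 * sigma2 (d n) n) / (2 * real n)) *
                 (real (k n) powr (3/2) * moment 2 (d n) n / real n ^ 2
                  + real (k n) ^ 3 * moment 3 (d n) n / real n ^ 3))"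
proof (rule bigoI)
  have "eventually (\<lambda>n. norm (real (k n)) \<le> 1/100 * norm (min
      ((real n ^ 2 / moment 2 (d n) n) powr (2/3)) ((real n ^ 3 / moment 3 (d n) n) powr (1/3))))
      at_top"
    using landau_o.smallD[OF ksmall, of "1/100"] by simp
  moreover have "eventually (\<lambda>n::nat. 0 < n) at_top"
    by (rule eventually_gt_at_top)
  ultimately show "eventually (\<lambda>n.
      norm (gfun (d n) n (k n) - exp (- (real (k n) ^ 2 * sigma2 (d n) n) / (2 * real n)))
      \<le> 26 * norm (exp (- (real (k n) ^ 2 * sigma2 (d n) n) / (2 * real n)) *
            (real (k n) powr (3/2) * moment 2 (d n) n / real n ^ 2
             + real (k n) ^ 3 * moment 3 (d n) n / real n ^ 3))) at_top"
  proof eventually_elim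
    case (elim n)
    then have "1 \<le> k n"
      using kpos[of n] by auto
    with elim show ?case
      using abs_gfun_minus_exp_le[OF degseq \<open>0 < n\<close>, of "k n"] by simp
  qed
qed

end
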